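(* Let $G=(V,E,w)$ be a connected weighted multigraph, let $S\subseteq V$, and let $\psi=\max_{v\in V}d(v,S)$. Then for every $x\in S$ and every $l\ge0$, \[ \mathrm{rad}_{C_S(l,x)}(x)\le \psi+2l, \] i.e. every vertex of $C_S(l,x)$ is within distance $\psi+2l$ of $x$ in the subgraph induced by $C_S(l,x)$.
   Context: Edge lengths are $d(e)=1/w(e)$; $d(u,S)$ is the shortest-path distance in $G$ from $u$ to $S$. $F(S)=\{(u\to v): (u,v)\in E,\ d(u,S)+d(u,v)=d(v,S)\}$ is the set of (directed) forward edges induced by $S$. The cone $C_S(l,x)$ is the set of vertices reachable from $x$ by a path in $G$ such that the sum of the lengths of traversed edges that are not traversed as forward edges of $F(S)$ is at most $l$. For $U\subseteq V$, $\mathrm{rad}_U(x)$ is the smallest $r$ such that every vertex of $U$ is within distance $r$ of $x$ in the induced subgraph $G(U)$. *)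

theory Defs
  imports Complex_Main "HOL-Library.Extended_Real"
begin

text \<open>A weighted multigraph is given by a vertex set V, an edge-identifier set E,
an endpoint map ends (an undirected edge e joins fst (ends e) and snd (ends e)),
and a weight w.
A traversal is a triple (u, e, v): edge e traversed from u to v.\<close>

definition edge_len :: "('e \<Rightarrow> real) \<Rightarrow> 'e \<Rightarrow> real" where
  "edge_len w e = 1 / w e"

definition traversal :: "'e set \<Rightarrow> ('e \<Rightarrow> 'v \<times> 'v) \<Rightarrow> 'v \<Rightarrow> 'e \<Rightarrow> 'v \<Rightarrow> bool" where
  "traversal E ends u e v \<longleftrightarrow> e \<in> E \<and> (ends e = (u, v) \<or> ends e = (v, u))"

fun walk :: "'e set \<Rightarrow> ('e \<Rightarrow> 'v \<times> 'v) \<Rightarrow> 'v set \<Rightarrow> 'v \<Rightarrow> ('v \<times> 'e \<times> 'v) list \<Rightarrow> 'v \<Rightarrow> bool" where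
  "walk E ends W x [] y \<longleftrightarrow> x = y \<and> x \<in> W"
| "walk E ends W x ((u, e, v) # p) y \<longleftrightarrow>
     u = x \<and> x \<in> W \<and> traversal E ends u e v \<and> walk E ends W v p y"

definition walk_len :: "('e \<Rightarrow> real) \<Rightarrow> ('v \<times> 'e \<times> 'v) list \<Rightarrow> real" where
  "walk_len w p = (\<Sum>(u, e, v) \<leftarrow> p. edge_len w e)"

text \<open>Shortest-path distance in the subgraph induced by W (infinite if no walk).\<close>
definition dist_in :: "'e set \<Rightarrow> ('e \<Rightarrow> 'v \<times> 'v) \<Rightarrow> ('e \<Rightarrow> real) \<Rightarrow> 'v set \<Rightarrow> 'v \<Rightarrow> 'v \<Rightarrow> ereal" where
  "dist_in E ends w W x y = (INF p \<in> {p. walk E ends W x p y}. ereal (walk_len w p))"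

definition dist_set :: "'v set \<Rightarrow> 'e set \<Rightarrow> ('e \<Rightarrow> 'v \<times> 'v) \<Rightarrow> ('e \<Rightarrow> real) \<Rightarrow> 'v \<Rightarrow> 'v set \<Rightarrow> ereal" where
  "dist_set V E ends w u S = (INF s \<in> S. dist_in E ends w V u s)"

definition forward :: "'v set \<Rightarrow> 'e set \<Rightarrow> ('e \<Rightarrow> 'v \<times> 'v) \<Rightarrow> ('e \<Rightarrow> real) \<Rightarrow> 'v set \<Rightarrow> 'v \<Rightarrow> 'e \<Rightarrow> 'v \<Rightarrow> bool" where
  "forward V E ends w S u e v \<longleftrightarrow>
     traversal E ends u e v \<and>
     dist_set V E ends w u S + ereal (edge_len w e) = dist_set V E ends w v S"

definition nonforward_len :: "'v set \<Rightarrow> 'e set \<Rightarrow> ('e \<Rightarrow> 'v \<times> 'v) \<Rightarrow> ('e \<Rightarrow> real) \<Rightarrow> 'v set \<Rightarrow> ('v \<times> 'e \<times> 'v) list \<Rightarrow> real" where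
  "nonforward_len V E ends w S p =
     (\<Sum>(u, e, v) \<leftarrow> p. if forward V E ends w S u e v then 0 else edge_len w e)"

definition cone :: "'v set \<Rightarrow> 'e set \<Rightarrow> ('e \<Rightarrow> 'v \<times> 'v) \<Rightarrow> ('e \<Rightarrow> real) \<Rightarrow> 'v set \<Rightarrow> real \<Rightarrow> 'v \<Rightarrow> 'v set" where
  "cone V E ends w S l x =
     {y. \<exists>p. walk E ends V x p y \<and> nonforward_len V E ends w S p \<le> l}"

definition rad :: "'e set \<Rightarrow> ('e \<Rightarrow> 'v \<times> 'v) \<Rightarrow> ('e \<Rightarrow> real) \<Rightarrow> 'v set \<Rightarrow> 'v \<Rightarrow> ereal" where
  "rad E ends w U x = (SUP y \<in> U. dist_in E ends w U x y)"

definition weighted_multigraph :: "'v set \<Rightarrow> 'e set \<Rightarrow> ('e \<Rightarrow> 'v \<times> 'v) \<Rightarrow> ('e \<Rightarrow> real) \<Rightarrow> bool" where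
  "weighted_multigraph V E ends w \<longleftrightarrow> finite V \<and> finite E \<and>
     (\<forall>e \<in> E. fst (ends e) \<in> V \<and> snd (ends e) \<in> V \<and> w e > 0)"

definition connected_mg :: "'v set \<Rightarrow> 'e set \<Rightarrow> ('e \<Rightarrow> 'v \<times> 'v) \<Rightarrow> bool" where
  "connected_mg V E ends \<longleftrightarrow> (\<forall>u \<in> V. \<forall>v \<in> V. \<exists>p. walk E ends V u p v)"

end

theory Submission
  imports Defs
begin

text \<open>Use \<open>D v = d(v,S)\<close> as a potential. A forward traversal of an edge of length \<open>c\<close>
raises \<open>D\<close> by exactly \<open>c\<close>; any other traversal lowers \<open>D\<close> by at most \<open>c\<close> (triangle inequality).
Hence a walk \<open>p\<close> from \<open>x\<close> to \<open>y\<close> has length at most \<open>D y - D x + 2 \<cdot> (non-forward length of p)\<close>.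
For \<open>x \<in> S\<close> and a walk witnessing \<open>y \<in> C\<^sub>S(l,x)\<close> this is at most \<open>\<psi> + 2l\<close>; and the walk stays
inside the cone, because its prefixes have no larger non-forward length.\<close>

lemma walk_endpoints_mem: "walk E ends W x p y \<Longrightarrow> x \<in> W \<and> y \<in> W"
  by (induction p arbitrary: x) auto

lemma walk_append:
  "walk E ends W x p z \<Longrightarrow> walk E ends W z q y \<Longrightarrow> walk E ends W x (p @ q) y"
  by (induction p arbitrary: x) auto

lemma walk_traversal: "walk E ends W x p y \<Longrightarrow> (u, e, v) \<in> set p \<Longrightarrow> traversal E ends u e v"
  by (induction p arbitrary: x) auto

lemma walk_len_Cons: "walk_len w ((u, e, v) # p) = edge_len w e + walk_len w p"
  by (simp add: walk_len_def)

lemma nonforward_len_Cons: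
  "nonforward_len V E ends w S ((u, e, v) # p) =
     (if forward V E ends w S u e v then 0 else edge_len w e) + nonforward_len V E ends w S p"
  by (simp add: nonforward_len_def)

lemma nonforward_len_append:
  "nonforward_len V E ends w S (p @ q) =
     nonforward_len V E ends w S p + nonforward_len V E ends w S q"
  by (simp add: nonforward_len_def)

lemma edge_len_pos: "weighted_multigraph V E ends w \<Longrightarrow> e \<in> E \<Longrightarrow> edge_len w e > 0"
  by (auto simp: weighted_multigraph_def edge_len_def)

lemma walk_edge_len_pos:
  assumes "weighted_multigraph V E ends w" "walk E ends W x p y" "(u, e, v) \<in> set p"
  shows "edge_len w e > 0"
  using walk_traversal[OF assms(2,3)] edge_len_pos[OF assms(1)] by (simp add: traversal_def)

lemma walk_len_nonneg:
  assumes "weighted_multigraph V E ends w" "walk E ends W x p y"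
  shows "walk_len w p \<ge> 0"
  unfolding walk_len_def
  by (rule sum_list_nonneg) (auto dest: walk_edge_len_pos[OF assms] less_imp_le)

lemma nonforward_len_nonneg:
  assumes "weighted_multigraph V E ends w" "walk E ends W x p y"
  shows "nonforward_len V E ends w S p \<ge> 0"
  unfolding nonforward_len_def
  by (rule sum_list_nonneg) (auto dest: walk_edge_len_pos[OF assms] less_imp_le)

lemma dist_in_le_walk_len: "walk E ends W x p y \<Longrightarrow> dist_in E ends w W x y \<le> ereal (walk_len w p)"
  unfolding dist_in_def by (rule INF_lower) simp

lemma dist_set_le_dist_in: "s \<in> S \<Longrightarrow> dist_set V E ends w u S \<le> dist_in E ends w V u s"
  unfolding dist_set_def by (rule INF_lower)

lemma dist_set_eq_0:
  assumes "weighted_multigraph V E ends w" "x \<in> S" "S \<subseteq> V"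
  shows "dist_set V E ends w x S = 0"
proof (rule antisym)
  have "walk E ends V x [] x"
    using assms(2,3) by auto
  then have "dist_in E ends w V x x \<le> 0"
    using dist_in_le_walk_len[of E ends V x "[]" x w] by (simp add: walk_len_def zero_ereal_def)
  then show "dist_set V E ends w x S \<le> 0"
    using dist_set_le_dist_in[OF assms(2)] order_trans by blast
  show "dist_set V E ends w x S \<ge> 0"
    unfolding dist_set_def dist_in_def
    by (intro INF_greatest) (use walk_len_nonneg[OF assms(1)] in auto)
qed

lemma dist_set_traversal_le:
  assumes "traversal E ends u e v" "v \<in> V"
  shows "dist_set V E ends w v S \<le> dist_set V E ends w u S + ereal (edge_len w e)"
proof -
  let ?c = "ereal (edge_len w e)"
  have c_finite: "\<bar>?c\<bar> \<noteq> \<infinity>" by simp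
  have "dist_set V E ends w v S - ?c \<le> dist_in E ends w V u s" if "s \<in> S" for s
    unfolding dist_in_def
  proof (rule INF_greatest)
    fix p assume "p \<in> {p. walk E ends V u p s}"
    then have "walk E ends V v ((v, e, u) # p) s"
      using assms by (auto simp: traversal_def)
    then have "dist_in E ends w V v s \<le> ereal (walk_len w ((v, e, u) # p))"
      by (rule dist_in_le_walk_len)
    then have "dist_set V E ends w v S \<le> ereal (walk_len w ((v, e, u) # p))"
      using dist_set_le_dist_in[OF \<open>s \<in> S\<close>] by (rule order_trans[rotated])
    then have "dist_set V E ends w v S \<le> ereal (walk_len w p) + ?c"
      by (simp add: walk_len_Cons add.commute)
    then show "dist_set V E ends w v S - ?c \<le> ereal (walk_len w p)"
      using ereal_minus_le[OF c_finite] by blast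
  qed
  then have "dist_set V E ends w v S - ?c \<le> dist_set V E ends w u S"
    unfolding dist_set_def[of V E ends w u S] by (rule INF_greatest)
  then show ?thesis
    using ereal_minus_le[OF c_finite] by blast
qed

lemma walk_len_add_dist_set_le:
  assumes "walk E ends V x p y"
  shows "ereal (walk_len w p) + dist_set V E ends w x S
           \<le> dist_set V E ends w y S + ereal (2 * nonforward_len V E ends w S p)"
  using assms
proof (induction p arbitrary: x)
  case Nil
  then show ?case by (simp add: walk_len_def nonforward_len_def)
next
  case (Cons a p)
  obtain e v where a: "a = (x, e, v)" and tr: "traversal E ends x e v" and "x \<in> V"
    and p: "walk E ends V v p y"
    using Cons.prems by (cases a) auto
  let ?D = "\<lambda>z. dist_set V E ends w z S"
  let ?c = "edge_len w e"
  let ?n = "nonforward_len V E ends w S p"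
  have IH: "ereal (walk_len w p) + ?D v \<le> ?D y + ereal (2 * ?n)"
    using Cons.IH[OF p] .
  have len: "ereal (walk_len w (a # p)) = ereal (walk_len w p) + ereal ?c"
    by (simp add: a walk_len_Cons)
  show ?case
  proof (cases "forward V E ends w S x e v")
    case True
    then have "?D x + ereal ?c = ?D v" by (simp add: forward_def)
    have "ereal (walk_len w (a # p)) + ?D x = ereal (walk_len w p) + (?D x + ereal ?c)"
      by (simp only: len add_ac)
    also have "\<dots> = ereal (walk_len w p) + ?D v"
      using \<open>?D x + ereal ?c = ?D v\<close> by simp
    finally show ?thesis using IH True by (simp add: a nonforward_len_Cons)
  next
    case False
    have "traversal E ends v e x" using tr by (auto simp: traversal_def)
    then have "?D x \<le> ?D v + ereal ?c" using \<open>x \<in> V\<close> by (rule dist_set_traversal_le)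
    then have "ereal (walk_len w p) + ereal ?c + ?D x
                 \<le> ereal (walk_len w p) + ereal ?c + (?D v + ereal ?c)"
      by (rule add_left_mono)
    then have "ereal (walk_len w (a # p)) + ?D x
                 \<le> (ereal (walk_len w p) + ?D v) + (ereal ?c + ereal ?c)"
      by (simp only: len add_ac)
    also have "\<dots> \<le> (?D y + ereal (2 * ?n)) + (ereal ?c + ereal ?c)"
      using IH by (rule add_right_mono)
    also have "\<dots> = ?D y + ereal (2 * (?c + ?n))"
      by (simp add: add_ac distrib_left)
    finally show ?thesis using False by (simp add: a nonforward_len_Cons)
  qed
qed

lemma walk_suffix_within_cone:
  assumes "weighted_multigraph V E ends w"
    and "walk E ends V x q z" "walk E ends V z p y"
    and "nonforward_len V E ends w S (q @ p) \<le> l"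
  shows "walk E ends (cone V E ends w S l x) z p y"
  using assms(2-)
proof (induction p arbitrary: z q)
  case Nil
  then show ?case by (force simp: cone_def)
next
  case (Cons a p)
  obtain e v where a: "a = (z, e, v)" and tr: "traversal E ends z e v"
    and p: "walk E ends V v p y"
    using Cons.prems(2) by (cases a) auto
  have "nonforward_len V E ends w S (a # p) \<ge> 0"
    using nonforward_len_nonneg[OF assms(1) Cons.prems(2)] .
  then have z_cone: "z \<in> cone V E ends w S l x"
    using Cons.prems(1,3) by (force simp: cone_def nonforward_len_append)
  have q': "walk E ends V x (q @ [a]) v"
    using Cons.prems(1) walk_append walk_endpoints_mem[OF p] tr
      walk_endpoints_mem[OF Cons.prems(1)] by (fastforce simp: a)
  have "walk E ends (cone V E ends w S l x) v p y"
    using Cons.IH[OF q' p] Cons.prems(3) by simp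
  then show ?case using z_cone tr by (simp add: a)
qed

lemma walk_within_cone:
  assumes "weighted_multigraph V E ends w" "walk E ends V x p y"
    and "nonforward_len V E ends w S p \<le> l"
  shows "walk E ends (cone V E ends w S l x) x p y"
  using walk_suffix_within_cone[OF assms(1) _ assms(2), where q = "[]"] assms(3)
    walk_endpoints_mem[OF assms(2)] by simp

theorem mainTheorem7:
  fixes V :: "'v set" and E :: "'e set" and ends :: "'e \<Rightarrow> 'v \<times> 'v" and w :: "'e \<Rightarrow> real"
    and S :: "'v set" and x :: 'v and l :: real
  assumes "weighted_multigraph V E ends w"
    and "connected_mg V E ends"
    and "S \<subseteq> V"
    and "x \<in> S"
    and "l \<ge> 0"
  shows "rad E ends w (cone V E ends w S l x) x
           \<le> (SUP v \<in> V. dist_set V E ends w v S) + ereal (2 * l)"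
  unfolding rad_def
proof (rule SUP_least)
  let ?D = "\<lambda>z. dist_set V E ends w z S"
  fix y assume "y \<in> cone V E ends w S l x"
  then obtain p where p: "walk E ends V x p y" and nf: "nonforward_len V E ends w S p \<le> l"
    unfolding cone_def by auto
  have "dist_in E ends w (cone V E ends w S l x) x y \<le> ereal (walk_len w p)"
    by (intro dist_in_le_walk_len walk_within_cone assms(1) p nf)
  also have "\<dots> = ereal (walk_len w p) + ?D x"
    using dist_set_eq_0[OF assms(1,4,3)] by simp
  also have "\<dots> \<le> ?D y + ereal (2 * nonforward_len V E ends w S p)"
    using p by (rule walk_len_add_dist_set_le)
  also have "\<dots> \<le> (SUP v \<in> V. ?D v) + ereal (2 * l)"
    using walk_endpoints_mem[OF p] nf by (intro add_mono SUP_upper) auto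
  finally show "dist_in E ends w (cone V E ends w S l x) x y \<le> (SUP v \<in> V. ?D v) + ereal (2 * l)" .
qed

end
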